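(* (1) Let $\mu>0$, $\rho>0$, and let $(x^*,s^* )\in\mathbb{R}^n\times\mathbb{R}^m$ be a local solution of the minimax problem $\min_{x\in\mathbb{R}^n}\max_{s\in\mathbb{R}^m}F(x,s;\mu,\rho)$, in the sense that $x^*$ is a local minimizer of $F(\cdot,s^*;\mu,\rho)$ and $s^*$ is a local maximizer of $F(x^*,\cdot;\mu,\rho)$. Then $$\nabla f(x^* )-\nabla c(x^* )s^*=0,\qquad c(x^* )-z^*=0,$$ where $z^*=z(x^*,s^*;\mu,\rho)$. (2) Let $\rho>0$ and suppose $(x^*,s^* )$ satisfies $\nabla f(x^* )-\nabla c(x^* )s^*=0$ and $c(x^* )-z^*=0$ with $z^*=z(x^*,s^*;0,\rho)$, i.e. $z_i^*=\frac{1}{2\rho}\big(|s_i^*-\rho c_i(x^* )|-(s_i^*-\rho c_i(x^* ))\big)$. Then $(x^*,s^* )$ is a KKT pair of problem (P): $\min f(x)$ s.t. $c(x)\ge0$, i.e. $\nabla f(x^* )-\nabla c(x^* )s^*=0$, $c(x^* )\ge 0$, $s^*\ge 0$, $c_i(x^* )s_i^*=0$ for all $i$.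
   Context: Let $f:\mathbb{R}^n\to\mathbb{R}$ and $c=(c_1,\dots,c_m):\mathbb{R}^n\to\mathbb{R}^m$ be twice continuously differentiable; $\nabla c(x)\in\mathbb{R}^{n\times m}$ denotes the matrix whose $i$-th column is $\nabla c_i(x)$. For parameters $\mu\ge0$, $\rho>0$ and variables $x\in\mathbb{R}^n$, $s\in\mathbb{R}^m$, define for $i=1,\dots,m$: $z_i(x,s;\mu,\rho)=\frac{1}{2\rho}\big(\sqrt{(s_i-\rho c_i(x))^2+4\rho\mu}-(s_i-\rho c_i(x))\big)$, $y_i(x,s;\mu,\rho)=\frac{1}{2\rho}\big(\sqrt{(s_i-\rho c_i(x))^2+4\rho\mu}+(s_i-\rho c_i(x))\big)$, and, for $\mu>0$, $h_i(x,s;\mu,\rho)=-\mu\ln z_i(x,s;\mu,\rho)+\frac{\rho}{2}y_i(x,s;\mu,\rho)^2-\frac{1}{2\rho}s_i^2$ and the augmented Lagrangian $F(x,s;\mu,\rho)=f(x)+\sum_{i=1}^m h_i(x,s;\mu,\rho)$. *)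

theory Defs
  imports "HOL-Analysis.Analysis"
begin

definition zfun :: "('n \<Rightarrow> real^'m) \<Rightarrow> real \<Rightarrow> real \<Rightarrow> 'n \<Rightarrow> real^'m \<Rightarrow> 'm \<Rightarrow> real" where
  "zfun c \<mu> \<rho> x s i =
     (sqrt ((s $ i - \<rho> * (c x $ i))^2 + 4 * \<rho> * \<mu>) - (s $ i - \<rho> * (c x $ i))) / (2 * \<rho>)"

definition yfun :: "('n \<Rightarrow> real^'m) \<Rightarrow> real \<Rightarrow> real \<Rightarrow> 'n \<Rightarrow> real^'m \<Rightarrow> 'm \<Rightarrow> real" where
  "yfun c \<mu> \<rho> x s i =
     (sqrt ((s $ i - \<rho> * (c x $ i))^2 + 4 * \<rho> * \<mu>) + (s $ i - \<rho> * (c x $ i))) / (2 * \<rho>)"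

definition hfun :: "('n \<Rightarrow> real^'m) \<Rightarrow> real \<Rightarrow> real \<Rightarrow> 'n \<Rightarrow> real^'m \<Rightarrow> 'm \<Rightarrow> real" where
  "hfun c \<mu> \<rho> x s i =
     - \<mu> * ln (zfun c \<mu> \<rho> x s i) + \<rho> / 2 * (yfun c \<mu> \<rho> x s i)^2 - (s $ i)^2 / (2 * \<rho>)"

definition Ffun :: "('n \<Rightarrow> real) \<Rightarrow> ('n \<Rightarrow> real^'m::finite) \<Rightarrow> real \<Rightarrow> real \<Rightarrow> 'n \<Rightarrow> real^'m \<Rightarrow> real" where
  "Ffun f c \<mu> \<rho> x s = f x + (\<Sum>i\<in>UNIV. hfun c \<mu> \<rho> x s i)"

definition C2_with_grad :: "(real^'n \<Rightarrow> real) \<Rightarrow> (real^'n \<Rightarrow> real^'n) \<Rightarrow> bool" where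
  "C2_with_grad \<phi> g \<longleftrightarrow>
     (\<forall>x. (\<phi> has_derivative (\<lambda>h. g x \<bullet> h)) (at x)) \<and>
     (\<exists>H :: real^'n \<Rightarrow> real^'n^'n. (\<forall>x. (g has_derivative (\<lambda>h. H x *v h)) (at x)) \<and> continuous_on UNIV H)"

definition KKT_pair :: "(real^'n \<Rightarrow> real^'n) \<Rightarrow> ('m::finite \<Rightarrow> real^'n \<Rightarrow> real^'n) \<Rightarrow> (real^'n \<Rightarrow> real^'m)
     \<Rightarrow> real^'n \<Rightarrow> real^'m \<Rightarrow> bool" where
  "KKT_pair gf gc c x s \<longleftrightarrow>
     gf x - (\<Sum>i\<in>UNIV. s $ i *\<^sub>R gc i x) = 0 \<and>
     (\<forall>i. c x $ i \<ge> 0) \<and> (\<forall>i. s $ i \<ge> 0) \<and> (\<forall>i. c x $ i * s $ i = 0)"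

end

(* Each h_i depends on (x, s) only through a = s_i - \<rho> c_i(x) and s_i: it equals
   H(a) - s_i^2/(2\<rho>) with H = -\<mu> ln z + \<rho> y^2/2, and H' = y because \<rho> y z = \<mu>.
   Hence the partial gradients of F are y_i - s_i/\<rho> in s and \<nabla>f - \<rho> \<Sum> y_i \<nabla>c_i in x.
   Stationarity in s gives \<rho> y_i = s_i, which by y - z = a/\<rho> is the same as z_i = c_i;
   substituting into stationarity in x gives \<nabla>f - \<nabla>c s = 0.  For \<mu> = 0 the
   function z becomes (|a| - a)/(2\<rho>), and c_i = z_i forces complementarity. *)

theory Submission
  imports Defs
begin

definition zval :: "real \<Rightarrow> real \<Rightarrow> real \<Rightarrow> real" where
  "zval \<mu> \<rho> a = (sqrt (a^2 + 4*\<rho>*\<mu>) - a) / (2*\<rho>)"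

definition yval :: "real \<Rightarrow> real \<Rightarrow> real \<Rightarrow> real" where
  "yval \<mu> \<rho> a = (sqrt (a^2 + 4*\<rho>*\<mu>) + a) / (2*\<rho>)"

definition hval :: "real \<Rightarrow> real \<Rightarrow> real \<Rightarrow> real" where
  "hval \<mu> \<rho> a = - \<mu> * ln (zval \<mu> \<rho> a) + \<rho>/2 * (yval \<mu> \<rho> a)^2"

lemma zfun_eq_zval: "zfun c \<mu> \<rho> x s i = zval \<mu> \<rho> (s$i - \<rho> * c x $ i)"
  unfolding zfun_def zval_def by simp

lemma yfun_eq_yval: "yfun c \<mu> \<rho> x s i = yval \<mu> \<rho> (s$i - \<rho> * c x $ i)"
  unfolding yfun_def yval_def by simp

lemma hfun_eq_hval: "hfun c \<mu> \<rho> x s i = hval \<mu> \<rho> (s$i - \<rho> * c x $ i) - (s$i)^2 / (2*\<rho>)"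
  unfolding hfun_def hval_def zfun_eq_zval yfun_eq_yval by simp

lemma yval_minus_zval: "\<rho> \<noteq> 0 \<Longrightarrow> yval \<mu> \<rho> a - zval \<mu> \<rho> a = a / \<rho>"
  unfolding yval_def zval_def by (simp add: field_simps)

lemma abs_less_sqrt_square_add:
  assumes "\<mu> > 0" "\<rho> > 0"
  shows "sqrt (a^2 + 4*\<rho>*\<mu>) > \<bar>a\<bar>"
proof -
  have "sqrt (a^2) < sqrt (a^2 + 4*\<rho>*\<mu>)" using assms by (intro real_sqrt_less_mono) auto
  then show ?thesis by simp
qed

lemma zval_pos: "\<mu> > 0 \<Longrightarrow> \<rho> > 0 \<Longrightarrow> zval \<mu> \<rho> a > 0"
  using abs_less_sqrt_square_add[of \<mu> \<rho> a] unfolding zval_def by auto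

lemma yval_mult_zval:
  assumes "\<mu> \<ge> 0" "\<rho> > 0"
  shows "\<rho> * (yval \<mu> \<rho> a * zval \<mu> \<rho> a) = \<mu>"
proof -
  have "sqrt (a^2 + 4*\<rho>*\<mu>)^2 = a^2 + 4*\<rho>*\<mu>" using assms by simp
  then show ?thesis
    using assms unfolding yval_def zval_def by (simp add: field_simps power2_eq_square)
qed

lemma hval_has_derivative:
  assumes "\<mu> > 0" "\<rho> > 0"
  shows "(hval \<mu> \<rho> has_real_derivative yval \<mu> \<rho> a) (at a)"
proof -
  define r where "r = sqrt (a^2 + 4*\<rho>*\<mu>)"
  have r_pos: "r > 0" using abs_less_sqrt_square_add[OF assms, of a] r_def by linarith
  have "a^2 + 4*\<rho>*\<mu> > 0" using assms by (simp add: add_nonneg_pos)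
  then have dr: "((\<lambda>a. sqrt (a^2 + 4*\<rho>*\<mu>)) has_real_derivative a / r) (at a)"
    unfolding r_def by (auto intro!: derivative_eq_intros simp: field_simps power2_eq_square)
  have dz: "(zval \<mu> \<rho> has_real_derivative - zval \<mu> \<rho> a / r) (at a)"
  proof -
    have "(zval \<mu> \<rho> has_real_derivative (a/r - 1) / (2*\<rho>)) (at a)"
      unfolding zval_def[abs_def] by (intro DERIV_cdivide DERIV_diff dr DERIV_ident)
    moreover have "(a/r - 1) / (2*\<rho>) = - zval \<mu> \<rho> a / r"
      using r_pos assms unfolding zval_def r_def[symmetric] by (simp add: field_simps)
    ultimately show ?thesis by simp
  qed
  have dy: "(yval \<mu> \<rho> has_real_derivative yval \<mu> \<rho> a / r) (at a)"
  proof -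
    have "(yval \<mu> \<rho> has_real_derivative (a/r + 1) / (2*\<rho>)) (at a)"
      unfolding yval_def[abs_def] by (intro DERIV_cdivide DERIV_add dr DERIV_ident)
    moreover have "(a/r + 1) / (2*\<rho>) = yval \<mu> \<rho> a / r"
      using r_pos assms unfolding yval_def r_def[symmetric] by (simp add: field_simps)
    ultimately show ?thesis by simp
  qed
  have "(hval \<mu> \<rho> has_real_derivative \<mu> / r + \<rho> * (yval \<mu> \<rho> a)^2 / r) (at a)"
    unfolding hval_def[abs_def]
    using zval_pos[OF assms, of a]
    by (auto intro!: derivative_eq_intros dz dy simp: field_simps power2_eq_square)
  moreover have "\<mu> / r + \<rho> * (yval \<mu> \<rho> a)^2 / r = yval \<mu> \<rho> a"
  proof -
    have "\<mu> + \<rho> * (yval \<mu> \<rho> a)^2 = \<rho> * yval \<mu> \<rho> a * (zval \<mu> \<rho> a + yval \<mu> \<rho> a)"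
      using yval_mult_zval[of \<mu> \<rho> a] assms by (simp add: algebra_simps power2_eq_square)
    also have "zval \<mu> \<rho> a + yval \<mu> \<rho> a = r / \<rho>"
      using assms unfolding zval_def yval_def r_def by (simp add: field_simps)
    finally show ?thesis using assms r_pos by (simp add: field_simps)
  qed
  ultimately show ?thesis by simp
qed

lemma zval_zero: "zval 0 \<rho> a = (\<bar>a\<bar> - a) / (2*\<rho>)"
  unfolding zval_def by simp

lemma complementarity_of_zval_zero:
  fixes c s :: real
  assumes "\<rho> > 0" and "c = zval 0 \<rho> (s - \<rho> * c)"
  shows "c \<ge> 0 \<and> s \<ge> 0 \<and> c * s = 0"
proof -
  define a where "a = s - \<rho> * c"
  have "2 * \<rho> * c = \<bar>a\<bar> - a"
    using assms unfolding zval_zero a_def[symmetric] by (simp add: field_simps)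
  then show ?thesis
    using assms(1) by (cases "a \<ge> 0") (auto simp: a_def mult_le_0_iff)
qed

lemma zfun_eq_of_multiplier:
  assumes "\<rho> \<noteq> 0" and "\<rho> * yfun c \<mu> \<rho> x s i = s $ i"
  shows "zfun c \<mu> \<rho> x s i = c x $ i"
  using yval_minus_zval[OF assms(1), of \<mu> "s$i - \<rho> * c x $ i"] assms
  unfolding zfun_eq_zval yfun_eq_yval by (simp add: field_simps)

lemma Ffun_has_derivative_in_s:
  fixes c :: "'n \<Rightarrow> real^'m"
  assumes "\<mu> > 0" "\<rho> > 0"
  shows "((\<lambda>s. Ffun f c \<mu> \<rho> x s) has_derivative
           (\<lambda>h. \<Sum>i\<in>UNIV. (yfun c \<mu> \<rho> x s i - s $ i / \<rho>) * h $ i)) (at s)"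
proof -
  have nth: "((\<lambda>s. s $ i) has_derivative (\<lambda>h. h $ i)) (at s)" for i :: 'm
    by (rule bounded_linear.has_derivative[OF bounded_linear_vec_nth has_derivative_ident])
  have "((\<lambda>s. hfun c \<mu> \<rho> x s i) has_derivative
          (\<lambda>h. (yfun c \<mu> \<rho> x s i - s $ i / \<rho>) * h $ i)) (at s)" for i
  proof -
    have inner: "((\<lambda>s. s$i - \<rho> * c x $ i) has_derivative (\<lambda>h. h $ i)) (at s)"
      using has_derivative_diff[OF nth has_derivative_const] by simp
    have outer: "(hval \<mu> \<rho> has_derivative (*) (yfun c \<mu> \<rho> x s i)) (at (s$i - \<rho> * c x $ i))"
      using hval_has_derivative[OF assms] unfolding yfun_eq_yval has_field_derivative_def .
    have sq: "((\<lambda>s. (s$i)^2 / (2*\<rho>)) has_derivative (\<lambda>h. s $ i / \<rho> * h $ i)) (at s)"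
    proof -
      have "((\<lambda>s. 1 / (2*\<rho>) * (s$i * s$i)) has_derivative
              (\<lambda>h. 1 / (2*\<rho>) * (s$i * h$i + h$i * s$i))) (at s)"
        by (intro has_derivative_mult_right has_derivative_mult nth)
      moreover have "(\<lambda>h. 1 / (2*\<rho>) * (s$i * h$i + h$i * s$i)) = (\<lambda>h. s $ i / \<rho> * h $ i)"
        using assms by (auto simp: field_simps)
      ultimately show ?thesis by (simp add: power2_eq_square)
    qed
    show ?thesis
      unfolding hfun_eq_hval
      using has_derivative_diff[OF has_derivative_compose[OF inner outer] sq]
      by (simp add: algebra_simps)
  qed
  then have "((\<lambda>s. Ffun f c \<mu> \<rho> x s) has_derivative
           (\<lambda>h. 0 + (\<Sum>i\<in>UNIV. (yfun c \<mu> \<rho> x s i - s $ i / \<rho>) * h $ i))) (at s)"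
    unfolding Ffun_def by (intro has_derivative_add has_derivative_const has_derivative_sum)
  then show ?thesis by simp
qed

lemma Ffun_has_derivative_in_x:
  fixes f :: "'a::real_inner \<Rightarrow> real" and c :: "'a \<Rightarrow> real^'m"
  assumes "\<mu> > 0" "\<rho> > 0"
    and f: "(f has_derivative (\<lambda>h. gf \<bullet> h)) (at x)"
    and c: "\<And>i. ((\<lambda>x. c x $ i) has_derivative (\<lambda>h. gc i \<bullet> h)) (at x)"
  shows "((\<lambda>x. Ffun f c \<mu> \<rho> x s) has_derivative
           (\<lambda>h. gf \<bullet> h - \<rho> * (\<Sum>i\<in>UNIV. yfun c \<mu> \<rho> x s i * (gc i \<bullet> h)))) (at x)"
proof -
  have "((\<lambda>x. hfun c \<mu> \<rho> x s i) has_derivative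
          (\<lambda>h. - \<rho> * (yfun c \<mu> \<rho> x s i * (gc i \<bullet> h)))) (at x)" for i
  proof -
    have inner: "((\<lambda>x. s$i - \<rho> * c x $ i) has_derivative (\<lambda>h. - \<rho> * (gc i \<bullet> h))) (at x)"
      using has_derivative_diff[OF has_derivative_const has_derivative_mult_right[OF c]] by simp
    have outer: "(hval \<mu> \<rho> has_derivative (*) (yfun c \<mu> \<rho> x s i)) (at (s$i - \<rho> * c x $ i))"
      using hval_has_derivative[OF assms(1,2)] unfolding yfun_eq_yval has_field_derivative_def .
    show ?thesis
      unfolding hfun_eq_hval
      using has_derivative_diff[OF has_derivative_compose[OF inner outer] has_derivative_const]
      by (simp add: algebra_simps)
  qed
  then have "((\<lambda>x. Ffun f c \<mu> \<rho> x s) has_derivative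
           (\<lambda>h. gf \<bullet> h + (\<Sum>i\<in>UNIV. - \<rho> * (yfun c \<mu> \<rho> x s i * (gc i \<bullet> h))))) (at x)"
    unfolding Ffun_def by (intro has_derivative_add f has_derivative_sum)
  then show ?thesis by (simp add: sum_distrib_left sum_negf)
qed

lemma has_derivative_zero_at_local_min:
  fixes g :: "'a::real_normed_vector \<Rightarrow> real"
  assumes "(g has_derivative g') (at x)" and "\<exists>e>0. \<forall>y. dist y x < e \<longrightarrow> g x \<le> g y"
  shows "g' = (\<lambda>v. 0)"
proof -
  from assms(2) obtain e where "e > 0" "\<forall>y. dist y x < e \<longrightarrow> g x \<le> g y" by blast
  then show ?thesis
    using differential_zero_maxmin[of x "ball x e", OF _ open_ball assms(1)]
    by (auto simp: dist_commute)
qed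

lemma has_derivative_zero_at_local_max:
  fixes g :: "'a::real_normed_vector \<Rightarrow> real"
  assumes "(g has_derivative g') (at x)" and "\<exists>e>0. \<forall>y. dist y x < e \<longrightarrow> g y \<le> g x"
  shows "g' = (\<lambda>v. 0)"
proof -
  from assms(2) obtain e where "e > 0" "\<forall>y. dist y x < e \<longrightarrow> g y \<le> g x" by blast
  then show ?thesis
    using differential_zero_maxmin[of x "ball x e", OF _ open_ball assms(1)]
    by (auto simp: dist_commute)
qed

lemma multiplier_of_local_max_in_s:
  assumes "\<mu> > 0" "\<rho> > 0"
    and "\<exists>e>0. \<forall>s'. dist s' s < e \<longrightarrow> Ffun f c \<mu> \<rho> x s' \<le> Ffun f c \<mu> \<rho> x s"
  shows "\<rho> * yfun c \<mu> \<rho> x s i = s $ i"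
proof -
  have "(\<lambda>h. \<Sum>j\<in>UNIV. (yfun c \<mu> \<rho> x s j - s $ j / \<rho>) * h $ j) = (\<lambda>h. 0)"
    using has_derivative_zero_at_local_max[OF Ffun_has_derivative_in_s[OF assms(1,2)] assms(3)] .
  then have "(\<Sum>j\<in>UNIV. (yfun c \<mu> \<rho> x s j - s $ j / \<rho>) * axis i 1 $ j) = 0"
    by meson
  then have "yfun c \<mu> \<rho> x s i - s $ i / \<rho> = 0"
    by (simp add: axis_def if_distrib sum.delta cong: if_cong)
  with assms(2) show ?thesis by (simp add: field_simps)
qed

lemma gradient_eq_of_local_min_in_x:
  fixes f :: "'a::real_inner \<Rightarrow> real" and c :: "'a \<Rightarrow> real^'m"
  assumes "\<mu> > 0" "\<rho> > 0"
    and "(f has_derivative (\<lambda>h. gf \<bullet> h)) (at x)"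
    and "\<And>i. ((\<lambda>x. c x $ i) has_derivative (\<lambda>h. gc i \<bullet> h)) (at x)"
    and "\<exists>e>0. \<forall>x'. dist x' x < e \<longrightarrow> Ffun f c \<mu> \<rho> x s \<le> Ffun f c \<mu> \<rho> x' s"
    and multiplier: "\<And>i. \<rho> * yfun c \<mu> \<rho> x s i = s $ i"
  shows "gf - (\<Sum>i\<in>UNIV. s $ i *\<^sub>R gc i) = 0"
proof -
  define G where "G = gf - (\<Sum>i\<in>UNIV. s $ i *\<^sub>R gc i)"
  have "(\<lambda>h. gf \<bullet> h - \<rho> * (\<Sum>i\<in>UNIV. yfun c \<mu> \<rho> x s i * (gc i \<bullet> h))) = (\<lambda>h. 0)"
    using has_derivative_zero_at_local_min[OF Ffun_has_derivative_in_x[OF assms(1-4)] assms(5)] .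
  then have "gf \<bullet> G - \<rho> * (\<Sum>i\<in>UNIV. yfun c \<mu> \<rho> x s i * (gc i \<bullet> G)) = 0"
    by meson
  then have "G \<bullet> G = 0"
    by (simp add: G_def inner_diff_left inner_sum_left sum_distrib_left mult.assoc[symmetric] multiplier)
  then show ?thesis by (simp add: G_def)
qed

theorem theorem3p1:
  fixes f :: "real^'n \<Rightarrow> real" and c :: "real^'n \<Rightarrow> real^'m"
    and gf :: "real^'n \<Rightarrow> real^'n" and gc :: "'m \<Rightarrow> real^'n \<Rightarrow> real^'n"
  assumes f_C2: "C2_with_grad f gf"
    and c_C2: "\<forall>i. C2_with_grad (\<lambda>x. c x $ i) (gc i)"
  shows
   "(\<forall>\<mu> \<rho> xs ss. \<mu> > 0 \<and> \<rho> > 0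
       \<and> (\<exists>e>0. \<forall>x. dist x xs < e \<longrightarrow> Ffun f c \<mu> \<rho> xs ss \<le> Ffun f c \<mu> \<rho> x ss)
       \<and> (\<exists>e>0. \<forall>s. dist s ss < e \<longrightarrow> Ffun f c \<mu> \<rho> xs s \<le> Ffun f c \<mu> \<rho> xs ss)
     \<longrightarrow> gf xs - (\<Sum>i\<in>UNIV. ss $ i *\<^sub>R gc i xs) = 0
       \<and> (\<forall>i. c xs $ i - zfun c \<mu> \<rho> xs ss i = 0))
  \<and> (\<forall>\<rho> xs ss. \<rho> > 0
       \<and> gf xs - (\<Sum>i\<in>UNIV. ss $ i *\<^sub>R gc i xs) = 0
       \<and> (\<forall>i. c xs $ i - zfun c 0 \<rho> xs ss i = 0)
     \<longrightarrow> KKT_pair gf gc c xs ss)"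
proof (rule conjI; intro allI impI)
  fix \<mu> \<rho> :: real and xs :: "real^'n" and ss :: "real^'m"
  assume "\<mu> > 0 \<and> \<rho> > 0
    \<and> (\<exists>e>0. \<forall>x. dist x xs < e \<longrightarrow> Ffun f c \<mu> \<rho> xs ss \<le> Ffun f c \<mu> \<rho> x ss)
    \<and> (\<exists>e>0. \<forall>s. dist s ss < e \<longrightarrow> Ffun f c \<mu> \<rho> xs s \<le> Ffun f c \<mu> \<rho> xs ss)"
  then have \<mu>: "\<mu> > 0" and \<rho>: "\<rho> > 0"
    and x_min: "\<exists>e>0. \<forall>x. dist x xs < e \<longrightarrow> Ffun f c \<mu> \<rho> xs ss \<le> Ffun f c \<mu> \<rho> x ss"
    and s_max: "\<exists>e>0. \<forall>s. dist s ss < e \<longrightarrow> Ffun f c \<mu> \<rho> xs s \<le> Ffun f c \<mu> \<rho> xs ss"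
    by auto
  have multiplier: "\<rho> * yfun c \<mu> \<rho> xs ss i = ss $ i" for i
    using multiplier_of_local_max_in_s[OF \<mu> \<rho> s_max] .
  have "(f has_derivative (\<lambda>h. gf xs \<bullet> h)) (at xs)"
    and "((\<lambda>x. c x $ i) has_derivative (\<lambda>h. gc i xs \<bullet> h)) (at xs)" for i
    using f_C2 c_C2 unfolding C2_with_grad_def by blast+
  from gradient_eq_of_local_min_in_x[OF \<mu> \<rho> this x_min multiplier]
  show "gf xs - (\<Sum>i\<in>UNIV. ss $ i *\<^sub>R gc i xs) = 0
        \<and> (\<forall>i. c xs $ i - zfun c \<mu> \<rho> xs ss i = 0)"
    using zfun_eq_of_multiplier[OF _ multiplier] \<rho> by simp
next
  fix \<rho> :: real and xs :: "real^'n" and ss :: "real^'m"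
  assume "\<rho> > 0 \<and> gf xs - (\<Sum>i\<in>UNIV. ss $ i *\<^sub>R gc i xs) = 0
    \<and> (\<forall>i. c xs $ i - zfun c 0 \<rho> xs ss i = 0)"
  then show "KKT_pair gf gc c xs ss"
    using complementarity_of_zval_zero[of \<rho> "c xs $ _" "ss $ _"]
    unfolding KKT_pair_def zfun_eq_zval by auto
qed

end
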